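(* Let $X,Y,Z$ be Dedekind complete Riesz spaces; all maps below are order continuous and increasing, and $f^{s}$ denotes the unique left order continuous increasing extension of $f$ to the sup-completions. (i) If $f,g:X\to Y$ satisfy $f\le g$, then $f^{s}\le g^{s}$. (ii) If $f,g,h:X\to Y$ satisfy $h=f+g$, then $h^{s}=f^{s}+g^{s}$. (iii) If $f:X\to Y$ and $g:Y\to Z$, then $(g\circ f)^{s}=g^{s}\circ f^{s}$.
   Context: For a Dedekind complete Riesz space $X$, its sup-completion $X^{s}$ is the set of classes of nonempty upward directed subsets of $X$ under $A\sim B$ iff $\sup_{a\in A}(x\wedge a)=\sup_{b\in B}(x\wedge b)$ for all $x\in X$, with induced addition, nonnegative scalar multiplication and order; $X\subseteq X^{s}$, every nonempty subset of $X^s$ has a supremum and every element is the supremum of an increasing net from $X$. A map $F$ is left order continuous if $x_\alpha\uparrow x$ implies $F(x_\alpha)\uparrow F(x)$. Every order continuous increasing map $f:X\to Y$ has a unique left order continuous increasing extension $f^s:X^s\to Y^s$. *)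

theory Defs
  imports Complex_Main
begin

text \<open>A Riesz space is an ordered real vector space which is a lattice; it is
Dedekind complete iff every nonempty order-bounded-above set has a supremum,
which is exactly the class conditionally_complete_lattice.\<close>

class dc_riesz = ordered_real_vector + conditionally_complete_lattice

definition up_directed :: "'a::ord set \<Rightarrow> bool" where
  "up_directed A \<longleftrightarrow> A \<noteq> {} \<and> (\<forall>a\<in>A. \<forall>b\<in>A. \<exists>c\<in>A. a \<le> c \<and> b \<le> c)"

definition down_directed :: "'a::ord set \<Rightarrow> bool" where
  "down_directed A \<longleftrightarrow> A \<noteq> {} \<and> (\<forall>a\<in>A. \<forall>b\<in>A. \<exists>c\<in>A. c \<le> a \<and> c \<le> b)"

definition is_sup :: "'a::ord set \<Rightarrow> 'a \<Rightarrow> bool" where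
  "is_sup S x \<longleftrightarrow> (\<forall>s\<in>S. s \<le> x) \<and> (\<forall>y. (\<forall>s\<in>S. s \<le> y) \<longrightarrow> x \<le> y)"

definition is_inf :: "'a::ord set \<Rightarrow> 'a \<Rightarrow> bool" where
  "is_inf S x \<longleftrightarrow> (\<forall>s\<in>S. x \<le> s) \<and> (\<forall>y. (\<forall>s\<in>S. y \<le> s) \<longrightarrow> y \<le> x)"

text \<open>An increasing net x_alpha with x_alpha increasing to x is represented by its
range, an upward directed set with supremum x (and conversely every upward
directed set is an increasing net indexed by itself).\<close>

definition left_order_continuous :: "('a::ord \<Rightarrow> 'b::ord) \<Rightarrow> bool" where
  "left_order_continuous F \<longleftrightarrow>
     (\<forall>D x. up_directed D \<and> is_sup D x \<longrightarrow> is_sup (F ` D) (F x))"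

definition order_continuous :: "('a::ord \<Rightarrow> 'b::ord) \<Rightarrow> bool" where
  "order_continuous F \<longleftrightarrow>
     (\<forall>D x. up_directed D \<and> is_sup D x \<longrightarrow> is_sup (F ` D) (F x)) \<and>
     (\<forall>D x. down_directed D \<and> is_inf D x \<longrightarrow> is_inf (F ` D) (F x))"

definition supc_rel :: "'a::dc_riesz set \<Rightarrow> 'a set \<Rightarrow> bool" where
  "supc_rel A B \<longleftrightarrow> up_directed A \<and> up_directed B \<and>
     (\<forall>x. Sup ((\<lambda>a. inf x a) ` A) = Sup ((\<lambda>b. inf x b) ` B))"

lemma supc_rel_part_equivp: "part_equivp (supc_rel :: 'a::dc_riesz set \<Rightarrow> 'a set \<Rightarrow> bool)"
proof (rule part_equivpI)
  show "\<exists>x. supc_rel x (x :: 'a set)"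
    by (rule exI[of _ "{0}"]) (simp add: supc_rel_def up_directed_def)
  show "symp (supc_rel :: 'a set \<Rightarrow> _)"
    by (rule sympI) (auto simp: supc_rel_def)
  show "transp (supc_rel :: 'a set \<Rightarrow> _)"
    by (rule transpI) (auto simp: supc_rel_def)
qed

quotient_type (overloaded) 'a supc = "'a::dc_riesz set" / partial: supc_rel
  morphisms rep_supc abs_supc
  by (rule supc_rel_part_equivp)

definition emb :: "'a::dc_riesz \<Rightarrow> 'a supc" where
  "emb x = abs_supc {x}"

instantiation supc :: (dc_riesz) ord
begin
definition less_eq_supc :: "'a supc \<Rightarrow> 'a supc \<Rightarrow> bool" where
  "less_eq_supc p q \<longleftrightarrow>
     (\<forall>x. Sup ((\<lambda>a. inf x a) ` rep_supc p) \<le> Sup ((\<lambda>b. inf x b) ` rep_supc q))"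
definition less_supc :: "'a supc \<Rightarrow> 'a supc \<Rightarrow> bool" where
  "less_supc p q \<longleftrightarrow> p \<le> q \<and> \<not> q \<le> p"
instance ..
end

instantiation supc :: (dc_riesz) plus
begin
definition plus_supc :: "'a supc \<Rightarrow> 'a supc \<Rightarrow> 'a supc" where
  "plus_supc p q = abs_supc {a + b | a b. a \<in> rep_supc p \<and> b \<in> rep_supc q}"
instance ..
end

definition supc_ext :: "('a::dc_riesz \<Rightarrow> 'b::dc_riesz) \<Rightarrow> 'a supc \<Rightarrow> 'b supc" where
  "supc_ext f = (THE F. (\<forall>x. F (emb x) = emb (f x)) \<and> (\<forall>p q. p \<le> q \<longrightarrow> F p \<le> F q) \<and> left_order_continuous F)"

end

theory Submission
  imports Defs "HOL-Library.Lattice_Algebras" "HOL-Library.Set_Algebras"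
begin

text \<open>An element of the sup-completion is the class of an upward directed set A, two sets
being identified when their traces x \<mapsto> Sup (inf x ` A) agree. For an order continuous
increasing f the map [A] \<mapsto> [f ` A] is well defined, increasing, left order continuous and
extends f, so by uniqueness it is f^s. With this formula the three claims become
comparisons of directed sets: f ` A lies elementwise below g ` A; h ` A and f ` A + g ` A are
mutually cofinal; and (g \<circ> f) ` A = g ` (f ` A). The analytic input is the infinite
distributive law inf y (Sup S) = Sup (inf y ` S), which makes the order of the
sup-completion compatible with images under left order continuous maps.\<close>

subclass (in dc_riesz) lattice_ab_group_add ..

lemma bdd_above_inf_image: "bdd_above (inf (x::'a::lattice) ` A)"
  by (rule bdd_aboveI[of _ x]) auto

lemma inf_cSup_distrib:
  fixes S :: "'a::dc_riesz set"
  assumes "S \<noteq> {}" and "bdd_above S"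
  shows "inf y (Sup S) = (SUP s\<in>S. inf y s)"
proof (rule antisym)
  define u where "u = (SUP s\<in>S. inf y s)"
  define c where "c = sup y (Sup S)"
  \<comment> \<open>s = sup y s + inf y s - y, and both terms on the right are dominated uniformly in s\<close>
  have "s \<le> c + u - y" if "s \<in> S" for s
  proof -
    have "sup y s \<le> c"
      unfolding c_def using that assms by (intro sup_mono order_refl cSup_upper)
    moreover have "inf y s \<le> u"
      unfolding u_def using that bdd_above_inf_image by (rule cSUP_upper)
    ultimately have "sup y s + inf y s - y \<le> c + u - y"
      by (intro diff_right_mono add_mono)
    then show ?thesis
      using add_eq_inf_sup[of y s] by (simp add: algebra_simps)
  qed
  then have "Sup S \<le> c + u - y"
    using assms by (intro cSup_least) auto
  then have "y + Sup S \<le> c + u"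
    by (simp add: le_diff_eq add.commute)
  moreover have "c + inf y (Sup S) = y + Sup S"
    unfolding c_def by (rule add_eq_inf_sup[symmetric])
  ultimately show "inf y (Sup S) \<le> u"
    by (metis add_le_cancel_left)
next
  show "(SUP s\<in>S. inf y s) \<le> inf y (Sup S)"
    using assms by (intro cSUP_least inf_mono order_refl cSup_upper)
qed

instance dc_riesz \<subseteq> distrib_lattice
proof
  have "inf x (sup y z) = sup (inf x y) (inf x z)" for x y z :: 'a
    using inf_cSup_distrib[of "{y, z}" x] by (simp add: cSup_insert)
  then show "sup x (inf y z) = inf (sup x y) (sup x z)" for x y z :: 'a
    by (rule distrib_imp1)
qed

lemma is_sup_cSup: "S \<noteq> {} \<Longrightarrow> bdd_above S \<Longrightarrow> is_sup S (Sup (S::'a::conditionally_complete_lattice set))"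
  unfolding is_sup_def by (auto intro: cSup_upper cSup_least)

lemma is_sup_unique: "is_sup S (x::'a::order) \<Longrightarrow> is_sup S y \<Longrightarrow> x = y"
  unfolding is_sup_def by (auto intro: antisym)

lemma up_directed_nonempty: "up_directed A \<Longrightarrow> A \<noteq> {}"
  by (simp add: up_directed_def)

lemma up_directed_singleton: "up_directed {a::'a::order}"
  by (simp add: up_directed_def)

lemma up_directed_image: "mono f \<Longrightarrow> up_directed A \<Longrightarrow> up_directed (f ` A)"
  unfolding up_directed_def by (simp add: image_iff) (meson monoD)

lemma up_directed_set_plus:
  fixes A B :: "'a::ordered_ab_semigroup_add set"
  assumes A: "up_directed A" and B: "up_directed B"
  shows "up_directed (A + B)"
  unfolding up_directed_def
proof (intro conjI ballI)
  show "A + B \<noteq> {}"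
    using A B by (auto simp: up_directed_def)
next
  fix c1 c2 assume "c1 \<in> A + B" "c2 \<in> A + B"
  then obtain a1 b1 a2 b2 where "a1 \<in> A" "b1 \<in> B" "a2 \<in> A" "b2 \<in> B"
    and c: "c1 = a1 + b1" "c2 = a2 + b2"
    by (auto elim!: set_plus_elim)
  then obtain a b where "a \<in> A" "b \<in> B" "a1 \<le> a" "a2 \<le> a" "b1 \<le> b" "b2 \<le> b"
    using A B unfolding up_directed_def by meson
  then show "\<exists>c\<in>A + B. c1 \<le> c \<and> c2 \<le> c"
    unfolding c by (intro bexI[of _ "a + b"] conjI add_mono) auto
qed

lemma order_continuous_imp_left: "order_continuous f \<Longrightarrow> left_order_continuous f"
  unfolding order_continuous_def left_order_continuous_def by blast

lemma left_order_continuous_comp: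
  fixes f :: "'a::order \<Rightarrow> 'b::order"
  assumes "mono f" and "left_order_continuous f" and "left_order_continuous g"
  shows "left_order_continuous (g \<circ> f)"
  unfolding left_order_continuous_def
proof (intro allI impI, elim conjE)
  fix D :: "'a set" and x assume "up_directed D" and "is_sup D x"
  then have "is_sup (g ` f ` D) (g (f x))"
    using assms up_directed_image unfolding left_order_continuous_def by blast
  then show "is_sup ((g \<circ> f) ` D) ((g \<circ> f) x)"
    by (simp add: image_comp)
qed

lemma left_order_continuous_add_const:
  "left_order_continuous (\<lambda>t::'a::ordered_ab_group_add. t + b)"
  unfolding left_order_continuous_def is_sup_def
  by (auto simp: add_le_cancel_right le_diff_eq[symmetric])

definition inf_trace :: "'a::dc_riesz set \<Rightarrow> 'a \<Rightarrow> 'a" where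
  "inf_trace A x = (SUP a\<in>A. inf x a)"

lemma inf_le_inf_trace: "a \<in> A \<Longrightarrow> inf x a \<le> inf_trace A x"
  unfolding inf_trace_def by (intro cSUP_upper bdd_above_inf_image)

lemma inf_trace_le_iff:
  "A \<noteq> {} \<Longrightarrow> inf_trace A \<le> inf_trace B \<longleftrightarrow> (\<forall>x. \<forall>a\<in>A. inf x a \<le> inf_trace B x)"
  unfolding le_fun_def by (auto intro: cSUP_least order_trans[OF inf_le_inf_trace] simp: inf_trace_def)

lemma inf_trace_le_if_cofinal:
  assumes "A \<noteq> {}" and "\<forall>a\<in>A. \<exists>b\<in>B. a \<le> b"
  shows "inf_trace A \<le> inf_trace B"
  using assms by (auto simp: inf_trace_le_iff intro: order_trans[OF inf_mono inf_le_inf_trace])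

lemma inf_trace_singleton: "inf_trace {a} x = inf x a"
  by (simp add: inf_trace_def)

lemma inf_trace_at_member:
  assumes "inf_trace A \<le> inf_trace B" and "a \<in> A" and "B \<noteq> {}"
  shows "inf_trace B a = a"
proof (rule antisym)
  show "inf_trace B a \<le> a"
    using \<open>B \<noteq> {}\<close> by (auto simp: inf_trace_def intro: cSUP_least)
  have "a = inf a a" by simp
  also have "\<dots> \<le> inf_trace A a" using \<open>a \<in> A\<close> by (rule inf_le_inf_trace)
  also have "\<dots> \<le> inf_trace B a" using assms(1) by (simp add: le_fun_def)
  finally show "a \<le> inf_trace B a" .
qed

text \<open>The hypothesis inf_trace B a = a says that a lies below the supremum of B in the
sup-completion; the truncated set inf a ` B then increases to a, and continuity of \<phi>
transports this to \<phi> a.\<close>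

lemma inf_le_inf_trace_image:
  fixes \<phi> :: "'a::dc_riesz \<Rightarrow> 'b::dc_riesz"
  assumes mono: "mono \<phi>" and cont: "left_order_continuous \<phi>"
    and B: "up_directed B" and a: "inf_trace B a = a"
  shows "inf y (\<phi> a) \<le> inf_trace (\<phi> ` B) y"
proof -
  have ne: "B \<noteq> {}" using B by (rule up_directed_nonempty)
  have bdd: "bdd_above (\<phi> ` inf a ` B)"
    by (rule bdd_aboveI[of _ "\<phi> a"]) (auto intro: monoD[OF mono])
  have "up_directed (inf a ` B)"
    using B by (intro up_directed_image monoI inf_mono order_refl)
  moreover have "is_sup (inf a ` B) a"
    using is_sup_cSup[OF _ bdd_above_inf_image[of a B]] ne a by (simp add: inf_trace_def)
  ultimately have "is_sup (\<phi> ` inf a ` B) (\<phi> a)"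
    using cont unfolding left_order_continuous_def by blast
  then have "\<phi> a = Sup (\<phi> ` inf a ` B)"
    using is_sup_cSup[OF _ bdd] ne by (auto intro: is_sup_unique)
  then have "inf y (\<phi> a) = (SUP b\<in>B. inf y (\<phi> (inf a b)))"
    using inf_cSup_distrib[OF _ bdd, of y] ne by (simp add: image_image)
  also have "\<dots> \<le> inf_trace (\<phi> ` B) y"
    unfolding inf_trace_def
  proof (rule cSUP_mono[OF ne bdd_above_inf_image])
    fix b assume "b \<in> B"
    then show "\<exists>m\<in>\<phi> ` B. inf y (\<phi> (inf a b)) \<le> inf y m"
      by (intro bexI[of _ "\<phi> b"] inf_mono order_refl monoD[OF mono] inf_le2) auto
  qed
  finally show ?thesis .
qed

lemma inf_trace_image_mono:
  fixes \<phi> :: "'a::dc_riesz \<Rightarrow> 'b::dc_riesz"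
  assumes "mono \<phi>" and "left_order_continuous \<phi>"
    and A: "up_directed A" and B: "up_directed B" and le: "inf_trace A \<le> inf_trace B"
  shows "inf_trace (\<phi> ` A) \<le> inf_trace (\<phi> ` B)"
proof -
  have "inf y (\<phi> a) \<le> inf_trace (\<phi> ` B) y" if "a \<in> A" for a y
    using inf_trace_at_member[OF le that up_directed_nonempty[OF B]]
    by (rule inf_le_inf_trace_image[OF assms(1,2) B])
  then show ?thesis
    using up_directed_nonempty[OF A] by (auto simp: inf_trace_le_iff)
qed

lemma inf_trace_set_plus_mono_left:
  fixes A A' B :: "'a::dc_riesz set"
  assumes A: "up_directed A" and A': "up_directed A'" and B: "up_directed B"
    and le: "inf_trace A \<le> inf_trace A'"
  shows "inf_trace (A + B) \<le> inf_trace (A' + B)"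
  unfolding inf_trace_le_iff[OF up_directed_nonempty[OF up_directed_set_plus[OF A B]]]
proof (intro allI ballI)
  fix x c assume "c \<in> A + B"
  then obtain a b where a: "a \<in> A" and b: "b \<in> B" and c: "c = a + b"
    by (auto elim: set_plus_elim)
  have "inf x (a + b) \<le> inf_trace ((\<lambda>t. t + b) ` A') x"
    using inf_trace_at_member[OF le a up_directed_nonempty[OF A']]
    by (intro inf_le_inf_trace_image A' left_order_continuous_add_const monoI add_right_mono)
  also have "\<dots> \<le> inf_trace (A' + B) x"
    using up_directed_nonempty[OF A'] b
    by (intro inf_trace_le_if_cofinal[unfolded le_fun_def, rule_format]) auto
  finally show "inf x c \<le> inf_trace (A' + B) x"
    unfolding c .
qed

lemma inf_trace_set_plus_mono:
  fixes A A' B B' :: "'a::dc_riesz set"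
  assumes "up_directed A" "up_directed A'" "up_directed B" "up_directed B'"
    and "inf_trace A \<le> inf_trace A'" "inf_trace B \<le> inf_trace B'"
  shows "inf_trace (A + B) \<le> inf_trace (A' + B')"
proof -
  have "inf_trace (A + B) \<le> inf_trace (A' + B)"
    using assms by (intro inf_trace_set_plus_mono_left)
  also have "\<dots> \<le> inf_trace (A' + B')"
    using inf_trace_set_plus_mono_left[of B B' A'] assms by (simp add: add.commute)
  finally show ?thesis .
qed

lemma supc_rel_iff_inf_trace:
  "supc_rel A B \<longleftrightarrow> up_directed A \<and> up_directed B \<and> inf_trace A = inf_trace B"
  by (auto simp: supc_rel_def inf_trace_def fun_eq_iff)

lemma less_eq_supc_iff_inf_trace: "p \<le> q \<longleftrightarrow> inf_trace (rep_supc p) \<le> inf_trace (rep_supc q)"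
  by (simp add: less_eq_supc_def inf_trace_def le_fun_def)

lemma up_directed_rep_supc: "up_directed (rep_supc p)"
  using Quotient3_rel_rep[OF Quotient3_supc, of p p] by (simp add: supc_rel_def)

lemma abs_rep_supc [simp]: "abs_supc (rep_supc p) = p"
  by (rule Quotient3_abs_rep[OF Quotient3_supc])

lemma inf_trace_rep_abs_supc:
  assumes "up_directed S"
  shows "inf_trace (rep_supc (abs_supc S)) = inf_trace S"
proof -
  have "supc_rel S S"
    using assms by (simp add: supc_rel_iff_inf_trace)
  then have "supc_rel (rep_supc (abs_supc S)) S"
    using Quotient3_rel[OF Quotient3_supc] Quotient3_rel_rep[OF Quotient3_supc]
    by (metis abs_rep_supc)
  then show ?thesis
    by (simp add: supc_rel_iff_inf_trace)
qed

lemma abs_supc_le_iff: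
  "up_directed S \<Longrightarrow> up_directed T \<Longrightarrow> abs_supc S \<le> abs_supc T \<longleftrightarrow> inf_trace S \<le> inf_trace T"
  by (simp add: less_eq_supc_iff_inf_trace inf_trace_rep_abs_supc)

lemma abs_supc_eq_iff:
  "up_directed S \<Longrightarrow> up_directed T \<Longrightarrow> abs_supc S = abs_supc T \<longleftrightarrow> inf_trace S = inf_trace T"
  using Quotient3_rel[OF Quotient3_supc, of S T] by (simp add: supc_rel_iff_inf_trace)

instance supc :: (dc_riesz) order
proof
  fix p q r :: "'a supc"
  show "p < q \<longleftrightarrow> p \<le> q \<and> \<not> q \<le> p"
    by (rule less_supc_def)
  show "p \<le> p"
    by (simp add: less_eq_supc_iff_inf_trace)
  show "p \<le> q \<Longrightarrow> q \<le> r \<Longrightarrow> p \<le> r"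
    unfolding less_eq_supc_iff_inf_trace by (rule order_trans)
  show "p \<le> q \<Longrightarrow> q \<le> p \<Longrightarrow> p = q"
    using abs_supc_eq_iff[OF up_directed_rep_supc up_directed_rep_supc, of p q]
      antisym[of "inf_trace (rep_supc p)" "inf_trace (rep_supc q)"]
    unfolding less_eq_supc_iff_inf_trace abs_rep_supc by blast
qed

lemma plus_abs_supc:
  assumes S: "up_directed S" and T: "up_directed T"
  shows "abs_supc S + abs_supc T = abs_supc (S + T)"
proof -
  let ?S' = "rep_supc (abs_supc S)" and ?T' = "rep_supc (abs_supc T)"
  have "abs_supc S + abs_supc T = abs_supc (?S' + ?T')"
    unfolding plus_supc_def set_plus_def by (rule arg_cong[where f = abs_supc]) blast
  also have "\<dots> = abs_supc (S + T)"
    using assms inf_trace_rep_abs_supc[OF S] inf_trace_rep_abs_supc[OF T]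
    by (subst abs_supc_eq_iff)
      (auto intro!: antisym inf_trace_set_plus_mono up_directed_set_plus up_directed_rep_supc)
  finally show ?thesis .
qed

lemma emb_le_abs_supc_iff:
  "up_directed S \<Longrightarrow> emb a \<le> abs_supc S \<longleftrightarrow> (\<forall>x. inf x a \<le> inf_trace S x)"
  unfolding emb_def
  by (simp add: abs_supc_le_iff up_directed_singleton le_fun_def inf_trace_singleton)

lemma is_sup_emb_abs_supc:
  assumes S: "up_directed S"
  shows "is_sup (emb ` S) (abs_supc S)"
  unfolding is_sup_def
proof (intro conjI ballI allI impI)
  fix s assume "s \<in> emb ` S"
  then show "s \<le> abs_supc S"
    using S by (auto simp: emb_le_abs_supc_iff intro: inf_le_inf_trace)
next
  fix q assume "\<forall>s\<in>emb ` S. s \<le> q"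
  then have "\<forall>x. \<forall>a\<in>S. inf x a \<le> inf_trace (rep_supc q) x"
    using emb_le_abs_supc_iff[OF up_directed_rep_supc, of _ q] by simp
  then show "abs_supc S \<le> q"
    using abs_supc_le_iff[OF S up_directed_rep_supc, of q]
    by (simp add: inf_trace_le_iff up_directed_nonempty[OF S])
qed

lemma abs_supc_le_iff_emb: "up_directed S \<Longrightarrow> abs_supc S \<le> q \<longleftrightarrow> (\<forall>s\<in>S. emb s \<le> q)"
  using is_sup_emb_abs_supc[of S] unfolding is_sup_def by (blast intro: order_trans)

lemma is_sup_emb_rep_supc: "is_sup (emb ` rep_supc p) p"
  using is_sup_emb_abs_supc[OF up_directed_rep_supc, of p] by simp

lemma emb_mono: "a \<le> b \<Longrightarrow> emb a \<le> emb b"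
  unfolding emb_def
  by (simp add: abs_supc_le_iff up_directed_singleton le_fun_def inf_trace_singleton le_infI2)

lemma emb_sup_le: "emb u \<le> p \<Longrightarrow> emb v \<le> p \<Longrightarrow> emb (sup u v) \<le> p"
  using emb_le_abs_supc_iff[OF up_directed_rep_supc, of _ p]
  by (simp add: inf_sup_distrib1)

lemma up_directed_emb_lower:
  assumes D: "up_directed D"
  shows "up_directed {u. \<exists>d\<in>D. emb u \<le> d}" (is "up_directed ?U")
  unfolding up_directed_def
proof (intro conjI ballI)
  obtain d a where "d \<in> D" "a \<in> rep_supc d"
    using up_directed_nonempty[OF D] up_directed_nonempty[OF up_directed_rep_supc] by blast
  then show "?U \<noteq> {}"
    using is_sup_emb_rep_supc[of d] unfolding is_sup_def by blast
next
  fix u v assume "u \<in> ?U" "v \<in> ?U"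
  then obtain d where "d \<in> D" "emb u \<le> d" "emb v \<le> d"
    using D unfolding up_directed_def by (blast intro: order_trans)
  then show "\<exists>w\<in>?U. u \<le> w \<and> v \<le> w"
    by (intro bexI[of _ "sup u v"]) (auto intro: emb_sup_le)
qed

lemma is_sup_supc_eq_abs_lower:
  assumes D: "up_directed D" and p: "is_sup D p"
  shows "p = abs_supc {u. \<exists>d\<in>D. emb u \<le> d}" (is "_ = abs_supc ?U")
proof -
  have U: "up_directed ?U"
    using D by (rule up_directed_emb_lower)
  have "d \<le> abs_supc ?U" if "d \<in> D" for d
  proof -
    have "rep_supc d \<subseteq> ?U"
      using that is_sup_emb_rep_supc[of d] unfolding is_sup_def by blast
    then show ?thesis
      using is_sup_emb_abs_supc[OF U] abs_supc_le_iff_emb[OF up_directed_rep_supc, of d]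
      unfolding is_sup_def by auto
  qed
  then have "p \<le> abs_supc ?U"
    using p unfolding is_sup_def by blast
  moreover have "abs_supc ?U \<le> p"
    unfolding abs_supc_le_iff_emb[OF U] using p unfolding is_sup_def by (blast intro: order_trans)
  ultimately show ?thesis
    by (rule antisym)
qed

definition supc_lift :: "('a::dc_riesz \<Rightarrow> 'b::dc_riesz) \<Rightarrow> 'a supc \<Rightarrow> 'b supc" where
  "supc_lift f p = abs_supc (f ` rep_supc p)"

context
  fixes f :: "'a::dc_riesz \<Rightarrow> 'b::dc_riesz"
  assumes mono: "mono f" and cont: "left_order_continuous f"
begin

lemma supc_lift_abs_supc:
  assumes S: "up_directed S"
  shows "supc_lift f (abs_supc S) = abs_supc (f ` S)"
proof -
  have R: "up_directed (rep_supc (abs_supc S))"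
    by (rule up_directed_rep_supc)
  have "inf_trace (rep_supc (abs_supc S)) = inf_trace S"
    using S by (rule inf_trace_rep_abs_supc)
  then have "inf_trace (f ` rep_supc (abs_supc S)) = inf_trace (f ` S)"
    by (intro antisym inf_trace_image_mono[OF mono cont] R S) simp_all
  then show ?thesis
    by (simp add: supc_lift_def abs_supc_eq_iff up_directed_image[OF mono] R S)
qed

lemma supc_lift_emb: "supc_lift f (emb x) = emb (f x)"
  unfolding emb_def by (simp add: supc_lift_abs_supc up_directed_singleton)

lemma supc_lift_mono: "p \<le> q \<Longrightarrow> supc_lift f p \<le> supc_lift f q"
  unfolding less_eq_supc_iff_inf_trace[of p q] supc_lift_def
  by (simp add: abs_supc_le_iff inf_trace_image_mono[OF mono cont] up_directed_image[OF mono]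
      up_directed_rep_supc)

lemma left_order_continuous_supc_lift: "left_order_continuous (supc_lift f)"
  unfolding left_order_continuous_def
proof (intro allI impI, elim conjE)
  fix D :: "'a supc set" and p assume D: "up_directed D" and p: "is_sup D p"
  show "is_sup (supc_lift f ` D) (supc_lift f p)"
    unfolding is_sup_def
  proof (intro conjI ballI allI impI)
    show "s \<le> supc_lift f p" if "s \<in> supc_lift f ` D" for s
      using that p unfolding is_sup_def by (auto intro: supc_lift_mono)
  next
    fix q assume q: "\<forall>s\<in>supc_lift f ` D. s \<le> q"
    let ?U = "{u. \<exists>d\<in>D. emb u \<le> d}"
    have U: "up_directed ?U"
      using D by (rule up_directed_emb_lower)
    have "emb (f u) \<le> q" if "u \<in> ?U" for u
    proof -
      obtain d where d: "d \<in> D" "emb u \<le> d"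
        using \<open>u \<in> ?U\<close> by blast
      have "emb (f u) = supc_lift f (emb u)"
        by (simp add: supc_lift_emb)
      also have "\<dots> \<le> supc_lift f d"
        using d(2) by (rule supc_lift_mono)
      also have "\<dots> \<le> q"
        using q d(1) by blast
      finally show ?thesis .
    qed
    then have "abs_supc (f ` ?U) \<le> q"
      by (simp add: abs_supc_le_iff_emb up_directed_image[OF mono U])
    then show "supc_lift f p \<le> q"
      using is_sup_supc_eq_abs_lower[OF D p] supc_lift_abs_supc[OF U] by simp
  qed
qed

lemma supc_lift_unique:
  assumes "\<forall>x. G (emb x) = emb (f x)" and "left_order_continuous G"
  shows "G = supc_lift f"
proof
  fix p
  have "G ` emb ` rep_supc p = supc_lift f ` emb ` rep_supc p"
    using assms(1) by (simp add: image_image supc_lift_emb)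
  moreover have "up_directed (emb ` rep_supc p)"
    by (intro up_directed_image monoI emb_mono up_directed_rep_supc)
  ultimately show "G p = supc_lift f p"
    using assms(2) left_order_continuous_supc_lift is_sup_emb_rep_supc[of p]
    unfolding left_order_continuous_def by (metis is_sup_unique)
qed

lemma supc_ext_eq_supc_lift: "supc_ext f = supc_lift f"
  unfolding supc_ext_def
proof (rule the_equality)
  show "(\<forall>x. supc_lift f (emb x) = emb (f x)) \<and> (\<forall>p q. p \<le> q \<longrightarrow> supc_lift f p \<le> supc_lift f q)
      \<and> left_order_continuous (supc_lift f)"
    using supc_lift_emb supc_lift_mono left_order_continuous_supc_lift by blast
qed (use supc_lift_unique in blast)

end

lemma supc_lift_le:
  assumes "mono f" and "mono g" and "f \<le> g"
  shows "supc_lift f \<le> supc_lift g"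
proof (rule le_funI)
  fix p
  have "inf_trace (f ` rep_supc p) \<le> inf_trace (g ` rep_supc p)"
    using assms(3) up_directed_nonempty[OF up_directed_rep_supc]
    by (intro inf_trace_le_if_cofinal) (auto simp: le_fun_def)
  then show "supc_lift f p \<le> supc_lift g p"
    unfolding supc_lift_def
    by (simp add: abs_supc_le_iff up_directed_image assms up_directed_rep_supc)
qed

lemma supc_lift_add:
  assumes f: "mono f" and g: "mono g"
  shows "supc_lift (\<lambda>x. f x + g x) p = supc_lift f p + supc_lift g p"
proof -
  define A where "A = rep_supc p"
  have A: "up_directed A"
    unfolding A_def by (rule up_directed_rep_supc)
  have fA: "up_directed (f ` A)" and gA: "up_directed (g ` A)"
    using A f g by (auto intro: up_directed_image)
  have hA: "up_directed ((\<lambda>x. f x + g x) ` A)"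
    using A f g by (intro up_directed_image monoI add_mono) (auto dest: monoD)
  have "\<exists>d\<in>(\<lambda>x. f x + g x) ` A. c \<le> d" if sum: "c \<in> f ` A + g ` A" for c
  proof -
    obtain a b where "a \<in> A" "b \<in> A" and c: "c = f a + g b"
      using sum by (auto simp: set_plus_def)
    then obtain d where "d \<in> A" "a \<le> d" "b \<le> d"
      using A unfolding up_directed_def by blast
    then show ?thesis
      unfolding c by (intro bexI[of _ "f d + g d"] add_mono monoD[OF f] monoD[OF g]) auto
  qed
  then have "inf_trace (f ` A + g ` A) \<le> inf_trace ((\<lambda>x. f x + g x) ` A)"
    using up_directed_nonempty[OF up_directed_set_plus[OF fA gA]]
    by (intro inf_trace_le_if_cofinal) auto
  moreover have "inf_trace ((\<lambda>x. f x + g x) ` A) \<le> inf_trace (f ` A + g ` A)"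
    using up_directed_nonempty[OF A] by (intro inf_trace_le_if_cofinal) auto
  ultimately have "abs_supc ((\<lambda>x. f x + g x) ` A) = abs_supc (f ` A + g ` A)"
    by (simp add: abs_supc_eq_iff hA up_directed_set_plus fA gA)
  then show ?thesis
    unfolding supc_lift_def A_def[symmetric] by (simp add: plus_abs_supc fA gA)
qed

lemma supc_lift_comp:
  assumes "mono f" and "mono g" and "left_order_continuous g"
  shows "supc_lift (g \<circ> f) = supc_lift g \<circ> supc_lift f"
proof
  fix p
  have "supc_lift g (supc_lift f p) = abs_supc (g ` f ` rep_supc p)"
    unfolding supc_lift_def[of f] using assms
    by (intro supc_lift_abs_supc up_directed_image up_directed_rep_supc)
  then show "supc_lift (g \<circ> f) p = (supc_lift g \<circ> supc_lift f) p"
    by (simp add: supc_lift_def image_comp)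
qed

theorem propositionP3:
  shows "(\<forall>(f :: 'x::dc_riesz \<Rightarrow> 'y::dc_riesz) g.
            mono f \<and> order_continuous f \<and> mono g \<and> order_continuous g \<and> f \<le> g
            \<longrightarrow> supc_ext f \<le> supc_ext g)
       \<and> (\<forall>(f :: 'x \<Rightarrow> 'y) g h.
            mono f \<and> order_continuous f \<and> mono g \<and> order_continuous g \<and>
            mono h \<and> order_continuous h \<and> h = (\<lambda>x. f x + g x)
            \<longrightarrow> supc_ext h = (\<lambda>p. supc_ext f p + supc_ext g p))
       \<and> (\<forall>(f :: 'x \<Rightarrow> 'y) (g :: 'y \<Rightarrow> 'z::dc_riesz).
            mono f \<and> order_continuous f \<and> mono g \<and> order_continuous g
            \<longrightarrow> supc_ext (g \<circ> f) = supc_ext g \<circ> supc_ext f)"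
proof (intro conjI allI impI; elim conjE)
  fix f g :: "'x \<Rightarrow> 'y"
  assume "mono f" "order_continuous f" "mono g" "order_continuous g" "f \<le> g"
  then show "supc_ext f \<le> supc_ext g"
    by (simp add: supc_ext_eq_supc_lift order_continuous_imp_left supc_lift_le)
next
  fix f g h :: "'x \<Rightarrow> 'y"
  assume "mono f" "order_continuous f" "mono g" "order_continuous g"
    "mono h" "order_continuous h" and h: "h = (\<lambda>x. f x + g x)"
  then show "supc_ext h = (\<lambda>p. supc_ext f p + supc_ext g p)"
    unfolding h by (simp add: supc_ext_eq_supc_lift order_continuous_imp_left supc_lift_add fun_eq_iff)
next
  fix f :: "'x \<Rightarrow> 'y" and g :: "'y \<Rightarrow> 'z"
  assume "mono f" "order_continuous f" "mono g" "order_continuous g"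
  moreover have "mono (g \<circ> f)"
    using calculation by (simp add: mono_def)
  ultimately show "supc_ext (g \<circ> f) = supc_ext g \<circ> supc_ext f"
    by (simp add: supc_ext_eq_supc_lift order_continuous_imp_left left_order_continuous_comp
        supc_lift_comp)
qed

end
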